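(* Let $R$ satisfy $\{0\}\subsetneq R\subseteq\mathbb Q$ and $r\cdot\mathbb Z\subseteq R$ for every $r\in R$, and let $m\in(\mathbb Z\setminus\{0\})\cap R$. Then for every $b\in R$: $b\neq 0$ if and only if the equation \[ y\cdot b-m^2-\sum_{i=1}^4 y_i^2=0 \] is solvable in $y,y_1,y_2,y_3,y_4\in R$. *)

theory Defs
  imports Complex_Main
begin

end

theory Submission
  imports Defs "HOL-Number_Theory.Number_Theory"
begin

(* The key fact is that every n > 0 divides some 1 + x1^2 + x2^2 + x3^2 + x4^2, i.e. -1 is a
   sum of four squares modulo n.  For a prime this follows by pigeonhole from the (p+1)/2
   residues of x^2 and of -1 - y^2; it lifts Hensel-style from p^k to p^(k+1) by shifting a
   coordinate prime to p (for p = 2 only from 8 upwards, starting from 8 = 1+1+1+1+4), and the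
   Chinese remainder theorem combines coprime moduli.  Writing a nonzero rational b as p/q and
   taking n = |p| gives an integer t with t*b = 1 + x1^2 + ... + x4^2; multiplied by m^2 this
   solves the equation with y = m^2 t and y_i = m x_i, all integer multiples of m and hence in R.
   For b = 0 the left-hand side is at most -m^2 < 0. *)

lemma prime_cong_square_imp_eq:
  fixes p x x' :: int
  assumes "prime p" "0 \<le> x" "0 \<le> x'" "2 * x < p" "2 * x' < p" "[x^2 = x'^2] (mod p)"
  shows "x = x'"
proof -
  have "p dvd (x - x') * (x + x')"
    using assms(6) by (simp add: cong_iff_dvd_diff power2_eq_square algebra_simps)
  then have "p dvd x - x' \<or> p dvd x + x'"
    using assms(1) prime_dvd_mult_iff by blast
  moreover have "\<bar>x - x'\<bar> < p" "x + x' < p" using assms(2-5) by auto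
  ultimately show ?thesis
    using assms(2,3) dvd_imp_le_int[of "x - x'" p] dvd_imp_le_int[of "x + x'" p] by force
qed

lemma prime_dvd_one_plus_two_squares:
  fixes p :: int
  assumes "prime p"
  shows "\<exists>x y. p dvd 1 + x^2 + y^2"
proof (cases "p = 2")
  case True
  then show ?thesis by (intro exI[of _ 1] exI[of _ 0]) simp
next
  case False
  have "odd p"
    using assms False prime_gt_1_int[OF assms] by (intro prime_odd_int) auto
  define h where "h = (p - 1) div 2"
  have hp: "2 * h + 1 = p" unfolding h_def using \<open>odd p\<close> by presburger
  define sq where "sq = (\<lambda>x::int. x^2 mod p)"
  define neg_sq where "neg_sq = (\<lambda>y::int. (-1 - y^2) mod p)"
  have "inj_on sq {0..h}"
  proof (rule inj_onI)
    fix x x' assume "x \<in> {0..h}" "x' \<in> {0..h}" "sq x = sq x'"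
    then show "x = x'"
      using prime_cong_square_imp_eq[OF assms, of x x'] hp by (auto simp: sq_def cong_def)
  qed
  moreover have "inj_on neg_sq {0..h}"
  proof (rule inj_onI)
    fix y y' assume "y \<in> {0..h}" "y' \<in> {0..h}" "neg_sq y = neg_sq y'"
    then have "[y'^2 = y^2] (mod p)"
      by (simp add: neg_sq_def mod_eq_dvd_iff cong_iff_dvd_diff)
    then show "y = y'"
      using prime_cong_square_imp_eq[OF assms, of y' y] hp \<open>y \<in> {0..h}\<close> \<open>y' \<in> {0..h}\<close>
      by auto
  qed
  ultimately have card: "card (sq ` {0..h}) + card (neg_sq ` {0..h}) = nat p + 1"
    using hp prime_gt_1_int[OF assms] by (simp add: card_image)
  have sub: "sq ` {0..h} \<union> neg_sq ` {0..h} \<subseteq> {0..<p}"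
    using prime_gt_1_int[OF assms] by (auto simp: sq_def neg_sq_def)
  have "sq ` {0..h} \<inter> neg_sq ` {0..h} \<noteq> {}"
  proof
    assume "sq ` {0..h} \<inter> neg_sq ` {0..h} = {}"
    then have "nat p + 1 = card (sq ` {0..h} \<union> neg_sq ` {0..h})"
      using card by (simp add: card_Un_disjoint)
    also have "\<dots> \<le> nat p" using card_mono[OF _ sub] by simp
    finally show False by simp
  qed
  then obtain x y where "sq x = neg_sq y" by auto
  then have "p dvd 1 + x^2 + y^2"
    by (auto simp: sq_def neg_sq_def mod_eq_dvd_iff algebra_simps)
  then show ?thesis by blast
qed

lemma coprime_mult_dvd_one_plus_four_squares:
  fixes k l :: int
  assumes "coprime k l"
    and "k dvd 1 + a1^2 + a2^2 + a3^2 + a4^2" and "l dvd 1 + b1^2 + b2^2 + b3^2 + b4^2"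
  shows "\<exists>c1 c2 c3 c4. k * l dvd 1 + c1^2 + c2^2 + c3^2 + c4^2"
proof -
  have "\<exists>c. [c = a] (mod k) \<and> [c = b] (mod l)" for a b
    using binary_chinese_remainder_int[OF assms(1)] by blast
  then obtain c where c: "\<And>a b. [c a b = a] (mod k)" "\<And>a b. [c a b = b] (mod l)"
    by metis
  let ?s = "1 + (c a1 b1)^2 + (c a2 b2)^2 + (c a3 b3)^2 + (c a4 b4)^2"
  have "[?s = 1 + a1^2 + a2^2 + a3^2 + a4^2] (mod k)"
    by (intro cong_add cong_pow c cong_refl)
  moreover have "[?s = 1 + b1^2 + b2^2 + b3^2 + b4^2] (mod l)"
    by (intro cong_add cong_pow c cong_refl)
  ultimately have "k dvd ?s" "l dvd ?s" using assms(2,3) cong_dvd_iff by blast+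
  then show ?thesis using divides_mult assms(1) by blast
qed

lemma lift_one_plus_square_odd_prime:
  fixes p k x S :: int
  assumes "k dvd 1 + x^2 + S" "prime p" "p \<noteq> 2" "p dvd k" "\<not> p dvd x"
  shows "\<exists>x'. p * k dvd 1 + x'^2 + S"
proof -
  obtain s where s: "1 + x^2 + S = k * s" using assms(1) by (auto simp: dvd_def)
  obtain j where j: "k = p * j" using assms(4) by (auto simp: dvd_def)
  have "\<not> p dvd 2"
    using assms(2,3) prime_gt_1_int[OF assms(2)] dvd_imp_le_int[of 2 p] by auto
  then have "coprime (2 * x) p"
    using assms(2,5) prime_dvd_mult_iff prime_imp_coprime coprime_commute by blast
  then obtain t where "[2 * x * t = - s] (mod p)"
    using cong_solve_dvd_int[of "2 * x" p "- s"] by auto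
  then have "p dvd s + 2 * x * t" by (simp add: cong_iff_dvd_diff add.commute)
  then obtain e where e: "s + 2 * x * t = p * e" by (auto simp: dvd_def)
  have "1 + (x + k * t)^2 + S = k * (s + 2 * x * t) + k * k * t^2"
    using s by (simp add: power2_eq_square algebra_simps)
  also have "\<dots> = p * k * (e + j * t^2)" using e j by (simp add: algebra_simps)
  finally show ?thesis by (metis dvd_triv_left)
qed

(* For odd x and 8 | k, (x + k/2)^2 = x^2 + k x + k^2/4 \<equiv> x^2 + k (mod 2k). *)
lemma lift_one_plus_square_two:
  fixes k x S :: int
  assumes "k dvd 1 + x^2 + S" "8 dvd k" "odd x"
  shows "\<exists>x'. 2 * k dvd 1 + x'^2 + S"
proof -
  obtain s where s: "1 + x^2 + S = k * s" using assms(1) by (auto simp: dvd_def)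
  obtain g where g: "k = 8 * g" using assms(2) by (auto simp: dvd_def)
  show ?thesis
  proof (cases "even s")
    case True
    then show ?thesis using s by (auto intro: exI[of _ x])
  next
    case False
    then obtain e where e: "s + x = 2 * e" using assms(3) by (metis odd_add dvdE)
    have "1 + (x + 4 * g)^2 + S = (1 + x^2 + S) + 8 * g * x + 16 * g^2"
      by (simp add: power2_eq_square algebra_simps)
    also have "\<dots> = 8 * g * (s + x) + 16 * g^2" using s g by (simp add: algebra_simps)
    also have "\<dots> = 2 * k * (e + g)" using e g by (simp add: power2_eq_square algebra_simps)
    finally show ?thesis by (metis dvd_triv_left)
  qed
qed

lemma lift_one_plus_four_squares_prime:
  fixes p k :: int
  assumes k: "k dvd 1 + a^2 + b^2 + c^2 + d^2"
    and "prime p" "p dvd k" "p = 2 \<Longrightarrow> 8 dvd k"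
  shows "\<exists>a b c d. p * k dvd 1 + a^2 + b^2 + c^2 + d^2"
proof -
  have lift: "\<exists>x'. p * k dvd 1 + x'^2 + S" if "k dvd 1 + x^2 + S" "\<not> p dvd x" for x S
    using that assms(2-4) lift_one_plus_square_odd_prime lift_one_plus_square_two by blast
  have "\<not> p dvd a \<or> \<not> p dvd b \<or> \<not> p dvd c \<or> \<not> p dvd d"
  proof (rule ccontr)
    assume "\<not> ?thesis"
    then have "p dvd a^2 + b^2 + c^2 + d^2" by (simp add: power2_eq_square)
    moreover have "p dvd 1 + a^2 + b^2 + c^2 + d^2" using assms(3) k by (rule dvd_trans)
    ultimately have "p dvd 1" by (simp add: add.assoc dvd_add_left_iff)
    then show False using assms(2) not_prime_unit by blast
  qed
  then show ?thesis
  proof (elim disjE)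
    assume "\<not> p dvd a"
    with lift[of a "b^2 + c^2 + d^2"] k show ?thesis by (auto simp: add.assoc)
  next
    assume "\<not> p dvd b"
    with lift[of b "a^2 + c^2 + d^2"] k show ?thesis by (auto simp: algebra_simps)
  next
    assume "\<not> p dvd c"
    with lift[of c "a^2 + b^2 + d^2"] k show ?thesis by (auto simp: algebra_simps)
  next
    assume "\<not> p dvd d"
    with lift[of d "a^2 + b^2 + c^2"] k show ?thesis by (auto simp: algebra_simps)
  qed
qed

lemma prime_power_dvd_one_plus_four_squares:
  fixes p :: int
  assumes "prime p"
  shows "\<exists>a b c d. p ^ k dvd 1 + a^2 + b^2 + c^2 + d^2"
proof (induction k)
  case 0
  show ?case by simp
next
  case (Suc k)
  consider "p = 2" "Suc k \<le> 3" | "k = 0" | "0 < k" "p = 2 \<Longrightarrow> 8 dvd p ^ k"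
    using le_imp_power_dvd[of 3 k "2::int"] by force
  then show ?case
  proof cases
    case 1
    then have "p ^ Suc k dvd 1 + 1^2 + 1^2 + 1^2 + 2^2"
      using le_imp_power_dvd[of "Suc k" 3 "2::int"] by simp
    then show ?thesis by blast
  next
    case 2
    obtain x y where "p dvd 1 + x^2 + y^2"
      using prime_dvd_one_plus_two_squares[OF assms] by blast
    then have "p ^ Suc k dvd 1 + x^2 + y^2 + 0^2 + 0^2" using 2 by simp
    then show ?thesis by blast
  next
    case 3
    obtain a b c d where "p ^ k dvd 1 + a^2 + b^2 + c^2 + d^2" using Suc.IH by blast
    moreover have "p dvd p ^ k" using 3 by simp
    ultimately have "\<exists>a b c d. p * p ^ k dvd 1 + a^2 + b^2 + c^2 + d^2"
      using 3 by (intro lift_one_plus_four_squares_prime[OF _ assms]) auto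
    then show ?thesis by simp
  qed
qed

lemma nat_coprime_prime_power_induct [consumes 1, case_names prime_power coprime]:
  fixes n :: nat
  assumes "0 < n"
    and prime_power: "\<And>p k. prime p \<Longrightarrow> P (p ^ k)"
    and coprime: "\<And>a b. coprime a b \<Longrightarrow> P a \<Longrightarrow> P b \<Longrightarrow> P (a * b)"
  shows "P n"
  using assms(1)
proof (induction n rule: less_induct)
  case (less n)
  show ?case
  proof (cases "n = 1")
    case True
    then show ?thesis using prime_power[of 2 0] by simp
  next
    case False
    then obtain p where p: "prime p" "p dvd n" using prime_factor_nat by blast
    obtain m where m: "n = p ^ multiplicity p n * m" "\<not> p dvd m"
      using multiplicity_decompose'[of n p] less.prems p(1) by (metis not_prime_unit neq0_conv)
    have "0 < multiplicity p n" using p less.prems by (simp add: prime_multiplicity_gt_zero_iff)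
    then have "1 < p ^ multiplicity p n" using p prime_gt_1_nat by (intro one_less_power) auto
    moreover have m_pos: "0 < m" using m less.prems by (auto intro!: Nat.gr0I)
    ultimately have "1 * m < p ^ multiplicity p n * m" by (rule mult_strict_right_mono)
    then have "m < n" using m(1) by simp
    moreover have "coprime (p ^ multiplicity p n) m"
      using p m prime_imp_coprime by auto
    ultimately show ?thesis
      using m(1) less.IH[OF _ m_pos] prime_power[OF p(1)] coprime by metis
  qed
qed

lemma dvd_one_plus_four_squares:
  fixes n :: int
  assumes "n \<noteq> 0"
  shows "\<exists>a b c d. n dvd 1 + a^2 + b^2 + c^2 + d^2"
proof -
  have "\<exists>a b c d. int n dvd 1 + a^2 + b^2 + c^2 + d^2" if "0 < n" for n :: nat
    using that
  proof (induction n rule: nat_coprime_prime_power_induct)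
    case (prime_power p k)
    then show ?case using prime_power_dvd_one_plus_four_squares[of "int p" k] by simp
  next
    case (coprime a b)
    then show ?case using coprime_mult_dvd_one_plus_four_squares[of "int a" "int b"] by auto
  qed
  from this[of "nat \<bar>n\<bar>"] show ?thesis using assms by simp
qed

lemma rat_mult_eq_one_plus_four_squares:
  fixes b :: rat
  assumes "b \<noteq> 0"
  shows "\<exists>t x1 x2 x3 x4 :: int. of_int t * b = of_int (1 + x1^2 + x2^2 + x3^2 + x4^2)"
proof -
  obtain p q where pq: "quotient_of b = (p, q)" by (cases "quotient_of b") auto
  then have b: "b = of_int p / of_int q" and "0 < q"
    by (simp_all add: quotient_of_div quotient_of_denom_pos)
  then have "p \<noteq> 0" using assms by auto
  then obtain x1 x2 x3 x4 s where "1 + x1^2 + x2^2 + x3^2 + x4^2 = p * s"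
    using dvd_one_plus_four_squares by (metis dvdE)
  moreover have "of_int (s * q) * b = of_int (p * s)" using b \<open>0 < q\<close> by simp
  ultimately show ?thesis by metis
qed

theorem lemma4:
  fixes R :: "rat set" and m :: rat
  assumes "{0} \<subset> R"
    and "\<forall>r\<in>R. \<forall>z::int. r * of_int z \<in> R"
    and "m \<in> \<int>" and "m \<noteq> 0" and "m \<in> R"
  shows "\<forall>b\<in>R. b \<noteq> 0 \<longleftrightarrow>
    (\<exists>y\<in>R. \<exists>y1\<in>R. \<exists>y2\<in>R. \<exists>y3\<in>R. \<exists>y4\<in>R.
       y * b - m^2 - (y1^2 + y2^2 + y3^2 + y4^2) = 0)"
proof (intro ballI iffI)
  fix b :: rat
  assume "b \<noteq> 0"
  then obtain t x1 x2 x3 x4 :: int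
    where t: "of_int t * b = of_int (1 + x1^2 + x2^2 + x3^2 + x4^2)"
    using rat_mult_eq_one_plus_four_squares by blast
  obtain M where M: "m = of_int M" using assms(3) Ints_cases by blast
  have multiple: "m * of_int z \<in> R" for z using assms(2,5) by blast
  have "m * of_int (M * t) * b - m^2
      - ((m * of_int x1)^2 + (m * of_int x2)^2 + (m * of_int x3)^2 + (m * of_int x4)^2) = 0"
    using arg_cong[OF t, of "\<lambda>u. m * m * u"] M by (simp add: power2_eq_square algebra_simps)
  then show "\<exists>y\<in>R. \<exists>y1\<in>R. \<exists>y2\<in>R. \<exists>y3\<in>R. \<exists>y4\<in>R.
      y * b - m^2 - (y1^2 + y2^2 + y3^2 + y4^2) = 0"
    using multiple by blast
next
  fix b :: rat
  assume "\<exists>y\<in>R. \<exists>y1\<in>R. \<exists>y2\<in>R. \<exists>y3\<in>R. \<exists>y4\<in>R.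
      y * b - m^2 - (y1^2 + y2^2 + y3^2 + y4^2) = 0"
  then obtain y y1 y2 y3 y4 where "y * b - m^2 - (y1^2 + y2^2 + y3^2 + y4^2) = 0" by blast
  then have "y * b = m^2 + (y1^2 + y2^2 + y3^2 + y4^2)" by simp
  moreover have "0 < m^2 + (y1^2 + y2^2 + y3^2 + y4^2)"
    using assms(4) by (simp add: add_pos_nonneg)
  ultimately show "b \<noteq> 0" by auto
qed

end
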